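(* There is a tight simplex of $13$ points in $\mathbb{H}\mathbb{P}^2$. In fact, there is such a tight simplex with cyclic symmetry, i.e., one that is mapped to itself by the isometry of $\mathbb{H}\mathbb{P}^2$ induced by the cyclic shift $\sigma(a,b,c)=(b,c,a)$ of $\mathbb{H}^3$.
   Context: $\mathbb{H}\mathbb{P}^2$ is the space of quaternionic lines in $\mathbb{H}^3$ (scalars acting on the right), points represented by unit vectors, with $\langle x,y\rangle = x^\dagger y$. A tight simplex of $N$ points in $\mathbb{H}\mathbb{P}^{2}$ is a set of $N$ distinct points $x_1,\dots,x_N$ with $|\langle x_i,x_j\rangle|^2=\frac{N-3}{3(N-1)}$ for all $i\ne j$. *)

theory Defs
  imports Complex_Main
begin

datatype quat = Quat (qre: real) (qi: real) (qj: real) (qk: real)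

definition qadd :: "quat \<Rightarrow> quat \<Rightarrow> quat" where
  "qadd p q = Quat (qre p + qre q) (qi p + qi q) (qj p + qj q) (qk p + qk q)"

text \<open>Hamilton product (i^2 = j^2 = k^2 = ijk = -1).\<close>
definition qmult :: "quat \<Rightarrow> quat \<Rightarrow> quat" where
  "qmult p q = Quat
     (qre p * qre q - qi p * qi q - qj p * qj q - qk p * qk q)
     (qre p * qi q + qi p * qre q + qj p * qk q - qk p * qj q)
     (qre p * qj q - qi p * qk q + qj p * qre q + qk p * qi q)
     (qre p * qk q + qi p * qj q - qj p * qi q + qk p * qre q)"

definition qcnj :: "quat \<Rightarrow> quat" where
  "qcnj q = Quat (qre q) (- qi q) (- qj q) (- qk q)"

definition qnormsq :: "quat \<Rightarrow> real" where
  "qnormsq q = (qre q)^2 + (qi q)^2 + (qj q)^2 + (qk q)^2"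

definition qone :: quat where "qone = Quat 1 0 0 0"

type_synonym hvec = "quat \<times> quat \<times> quat"

definition hinner :: "hvec \<Rightarrow> hvec \<Rightarrow> quat" where
  "hinner x y = (case x of (a, b, c) \<Rightarrow> case y of (d, e, f) \<Rightarrow>
      qadd (qadd (qmult (qcnj a) d) (qmult (qcnj b) e)) (qmult (qcnj c) f))"

text \<open>Right scalar multiplication and the quaternionic line (point of HP^2) spanned by x.\<close>
definition hscale :: "hvec \<Rightarrow> quat \<Rightarrow> hvec" where
  "hscale x q = (case x of (a, b, c) \<Rightarrow> (qmult a q, qmult b q, qmult c q))"

definition hline :: "hvec \<Rightarrow> hvec set" where
  "hline x = {hscale x q | q. True}"

text \<open>Cyclic shift sigma(a,b,c) = (b,c,a) of H^3; it acts on points of HP^2 by image.\<close>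
definition cshift :: "hvec \<Rightarrow> hvec" where
  "cshift x = (case x of (a, b, c) \<Rightarrow> (b, c, a))"

definition tight_simplex :: "nat \<Rightarrow> (nat \<Rightarrow> hvec) \<Rightarrow> bool" where
  "tight_simplex N x \<longleftrightarrow>
     (\<forall>i<N. hinner (x i) (x i) = qone) \<and>
     (\<forall>i<N. \<forall>j<N. i \<noteq> j \<longrightarrow>
        hline (x i) \<noteq> hline (x j) \<and>
        qnormsq (hinner (x i) (x j)) = (real N - 3) / (3 * (real N - 1)))"

definition simplex_points :: "nat \<Rightarrow> (nat \<Rightarrow> hvec) \<Rightarrow> hvec set set" where
  "simplex_points N x = hline ` x ` {..<N}"

end

theory Submission
  imports Defs
begin

text \<open>
  Let \<open>\<zeta>\<close> be a primitive 13th root of unity in the complex subfield \<open>\<real> + \<real>i\<close> of the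
  quaternions and \<open>\<omega> = (-1 - i - j - k)/2\<close>, a unit of order 3 whose conjugation action permutes
  \<open>i, j, k\<close> cyclically. Put \<open>x t = (\<zeta>^t, \<zeta>^(3t) \<omega>, \<zeta>^(9t) \<omega>\<^sup>2) / \<surd>3\<close> for \<open>t\<close> modulo 13.
  Because \<open>\<omega>\<close> moves the second and third coordinates into the \<open>k\<close> and \<open>j\<close> directions,
  \<open>|\<langle>x s, x t\<rangle>|\<^sup>2 = (3 + 2 \<Sigma> cos(a\<alpha>) cos(b\<alpha>)) / 9\<close> with \<open>\<alpha> = 2\<pi>(t - s)/13\<close> and the sum over
  pairs \<open>a < b\<close> in the subgroup \<open>{1, 3, 9}\<close> of units mod 13. Product-to-sum turns that sum into
  half the sum of the nontrivial 13th roots of unity, i.e. \<open>-1/4\<close>, so every inner product has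
  \<open>|\<langle>x s, x t\<rangle>|\<^sup>2 = 5/18 = (13 - 3) / (3 (13 - 1))\<close>. Since \<open>27 \<equiv> 1 (mod 13)\<close>, the cyclic shift
  sends \<open>x t\<close> to \<open>x (3t) \<omega>\<close>, which spans the same quaternionic line as \<open>x (3t)\<close>.
\<close>

lemma sum_cos_multiples:
  "2 * sin (a/2) * (\<Sum>j<n. cos (real j * a)) = sin ((2 * real n - 1) * a / 2) + sin (a/2)"
proof (induction n)
  case 0
  then show ?case by simp
next
  case (Suc n)
  have half_plus: "a/2 + real n * a = (2 * real n + 1) * a / 2"
    and half_minus: "a/2 - real n * a = - ((2 * real n - 1) * a / 2)"
    by (simp_all add: field_simps)
  have "2 * sin (a/2) * cos (real n * a) = sin ((2 * real n + 1) * a / 2) - sin ((2 * real n - 1) * a / 2)"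
    using sin_times_cos[of "a/2" "real n * a"] unfolding half_plus half_minus sin_minus by simp
  then show ?case using Suc by (simp add: algebra_simps)
qed

lemma sum_cos_root_of_unity:
  fixes D :: int
  assumes "\<not> int n dvd D"
  shows "(\<Sum>j<n. cos (real j * (2 * pi * D / n))) = 0"
proof (cases "n = 0")
  case False
  define a where "a = 2 * pi * D / n"
  have "(2 * real n - 1) * a / 2 = (2 * pi) * D - a/2"
    using False by (simp add: a_def field_simps)
  then have sin_end: "sin ((2 * real n - 1) * a / 2) = - sin (a/2)"
    by (simp only: sin_diff sin_int_2pin cos_int_2pin mult_zero_left diff_zero mult_1_left)
  have "sin (a/2) \<noteq> 0"
  proof
    assume "sin (a/2) = 0"
    then obtain i :: int where "a/2 = i * pi" by (auto simp: sin_zero_iff_int2)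
    then have "real_of_int D = real_of_int (int n * i)" using False by (simp add: a_def field_simps)
    with assms show False by (simp only: of_int_eq_iff) simp
  qed
  with sum_cos_multiples[of a n] sin_end show ?thesis by (simp add: a_def)
qed simp

lemma cos_products_1_3_9:
  fixes D :: int
  assumes "\<not> 13 dvd D"
  defines "a \<equiv> 2 * pi * D / 13"
  shows "cos a * cos (3*a) + cos (3*a) * cos (9*a) + cos a * cos (9*a) = -1/4"
proof -
  have reflect: "cos (real (13 - k) * a) = cos (real k * a)" if "k \<le> 13" for k
  proof -
    have "real (13 - k) * a = (2 * pi) * D - real k * a"
      using that by (simp add: a_def of_nat_diff field_simps)
    then show ?thesis by (simp add: cos_diff)
  qed
  have "(\<Sum>j<13. cos (real j * a)) = 0"
    using sum_cos_root_of_unity[of 13 D] assms by (simp add: a_def)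
  then have "1 + 2 * (cos a + cos (2*a) + cos (3*a) + cos (4*a) + cos (5*a) + cos (6*a)) = 0"
    using reflect[of 1] reflect[of 2] reflect[of 3] reflect[of 4] reflect[of 5] reflect[of 6]
    by (simp add: eval_nat_numeral)
  moreover have "cos a * cos (3*a) = (cos (2*a) + cos (4*a)) / 2"
    and "cos (3*a) * cos (9*a) = (cos (6*a) + cos (12*a)) / 2"
    and "cos a * cos (9*a) = (cos (8*a) + cos (10*a)) / 2"
    using cos_times_cos[of "3*a" a] cos_times_cos[of "9*a" "3*a"] cos_times_cos[of "9*a" a]
    by (simp_all add: mult.commute)
  moreover have "cos (12*a) = cos a" "cos (10*a) = cos (3*a)" "cos (8*a) = cos (5*a)"
    using reflect[of 1] reflect[of 3] reflect[of 5] by simp_all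
  ultimately show ?thesis by simp
qed

lemma qmult_assoc: "qmult (qmult p q) r = qmult p (qmult q r)"
  by (simp add: qmult_def algebra_simps)

lemma qmult_qone [simp]: "qmult p qone = p" "qmult qone p = p"
  by (simp_all add: qmult_def qone_def)

lemma qcnj_qmult_self: "qmult (qcnj q) q = Quat (qnormsq q) 0 0 0"
  by (simp add: qmult_def qcnj_def qnormsq_def power2_eq_square algebra_simps)

lemma hscale_qone [simp]: "hscale x qone = x"
  by (cases x) (simp add: hscale_def)

lemma hscale_hscale: "hscale (hscale x p) q = hscale x (qmult p q)"
  by (cases x) (simp add: hscale_def qmult_assoc)

lemma hline_eq_range: "hline x = range (hscale x)"
  by (auto simp: hline_def)

lemma hinner_hscale_right: "hinner y (hscale x q) = qmult (hinner y x) q"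
  by (cases x; cases y) (simp add: hinner_def hscale_def qmult_def qadd_def qcnj_def algebra_simps)

lemma hinner_hscale_left: "hinner (hscale x q) y = qmult (qcnj q) (hinner x y)"
  by (cases x; cases y) (simp add: hinner_def hscale_def qmult_def qadd_def qcnj_def algebra_simps)

lemma hline_hscale:
  assumes "qmult p q = qone"
  shows "hline (hscale x p) = hline x"
proof (intro equalityI subsetI)
  fix y assume "y \<in> hline (hscale x p)"
  then show "y \<in> hline x" by (auto simp: hline_eq_range hscale_hscale)
next
  fix y assume "y \<in> hline x"
  then obtain r where "y = hscale x r" by (auto simp: hline_eq_range)
  then have "y = hscale (hscale x p) (qmult q r)"
    using assms by (simp add: hscale_hscale flip: qmult_assoc)
  then show "y \<in> hline (hscale x p)" by (auto simp: hline_eq_range)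
qed

lemma hline_eq_imp_qnormsq_hinner_eq_1:
  assumes "hinner x x = qone" "hinner y y = qone" "hline x = hline y"
  shows "qnormsq (hinner y x) = 1"
proof -
  have "x \<in> hline y" using assms(3) rangeI[of "hscale x" qone] by (simp add: hline_eq_range)
  then obtain q where x: "x = hscale y q" by (auto simp: hline_eq_range)
  then have "hinner y x = q" using assms(2) by (simp add: hinner_hscale_right)
  moreover have "hinner x x = Quat (qnormsq q) 0 0 0"
    using x assms(2) by (simp add: hinner_hscale_right hinner_hscale_left qcnj_qmult_self)
  ultimately show ?thesis using assms(1) by (simp add: qone_def)
qed

lemma cshift_hscale: "cshift (hscale x q) = hscale (cshift x) q"
  by (cases x) (simp add: cshift_def hscale_def)

lemma image_cshift_hline: "cshift ` hline x = hline (cshift x)"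
  by (simp add: hline_eq_range image_image cshift_hscale)

definition omega :: quat where "omega = Quat (-1/2) (-1/2) (-1/2) (-1/2)"

lemma omega_mult_omega: "qmult omega omega = qcnj omega"
  by (simp add: omega_def qmult_def qcnj_def)

lemma omega_mult_qcnj_omega: "qmult omega (qcnj omega) = qone"
  by (simp add: omega_def qmult_def qcnj_def qone_def)

lemma qcnj_omega_mult_omega: "qmult (qcnj omega) omega = qone"
  by (simp add: omega_def qmult_def qcnj_def qone_def)

lemma qcnj_mult_complex:
  "qmult (qcnj (Quat a b 0 0)) (Quat c d 0 0) = Quat (a*c + b*d) (a*d - b*c) 0 0"
  by (simp add: qmult_def qcnj_def)

lemma qcnj_mult_omega_complex:
  "qmult (qcnj (qmult (Quat a b 0 0) omega)) (qmult (Quat c d 0 0) omega) = Quat (a*c + b*d) 0 0 (a*d - b*c)"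
  by (simp add: qmult_def qcnj_def omega_def algebra_simps)

lemma qcnj_mult_qcnj_omega_complex:
  "qmult (qcnj (qmult (Quat a b 0 0) (qcnj omega))) (qmult (Quat c d 0 0) (qcnj omega)) = Quat (a*c + b*d) 0 (a*d - b*c) 0"
  by (simp add: qmult_def qcnj_def omega_def algebra_simps)

definition scaled_cis :: "real \<Rightarrow> quat" where
  "scaled_cis x = Quat (cos x / sqrt 3) (sin x / sqrt 3) 0 0"

lemma cos_sin_div_sqrt3_products:
  "cos x / sqrt 3 * (cos y / sqrt 3) + sin x / sqrt 3 * (sin y / sqrt 3) = cos (y - x) / 3"
  "cos x / sqrt 3 * (sin y / sqrt 3) - sin x / sqrt 3 * (cos y / sqrt 3) = sin (y - x) / 3"
  by (simp_all add: cos_diff sin_diff field_simps)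

lemma qcnj_scaled_cis_mult:
  "qmult (qcnj (scaled_cis x)) (scaled_cis y) = Quat (cos (y - x) / 3) (sin (y - x) / 3) 0 0"
  "qmult (qcnj (qmult (scaled_cis x) omega)) (qmult (scaled_cis y) omega) =
     Quat (cos (y - x) / 3) 0 0 (sin (y - x) / 3)"
  "qmult (qcnj (qmult (scaled_cis x) (qcnj omega))) (qmult (scaled_cis y) (qcnj omega)) =
     Quat (cos (y - x) / 3) 0 (sin (y - x) / 3) 0"
  unfolding scaled_cis_def qcnj_mult_complex qcnj_mult_omega_complex qcnj_mult_qcnj_omega_complex
    cos_sin_div_sqrt3_products by simp_all

definition zeta13 :: "int \<Rightarrow> quat" where
  "zeta13 t = scaled_cis (2 * pi * t / 13)"

definition simplex13 :: "int \<Rightarrow> hvec" where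
  "simplex13 t = (zeta13 t, qmult (zeta13 (3*t)) omega, qmult (zeta13 (9*t)) (qcnj omega))"

lemma zeta13_mod: "zeta13 (t mod 13) = zeta13 t"
proof -
  have "zeta13 (r + 13 * k) = zeta13 r" for r k
  proof -
    have shift: "2 * pi * of_int (r + 13 * k) / 13 = 2 * pi * r / 13 + (2 * pi) * k"
      by (simp add: field_simps)
    show ?thesis unfolding zeta13_def shift by (simp add: scaled_cis_def cos_add sin_add)
  qed
  then show ?thesis by (metis mod_mult_div_eq)
qed

lemma hinner_simplex13:
  fixes s t :: int
  defines "\<alpha> \<equiv> 2 * pi * (t - s) / 13"
  shows "hinner (simplex13 s) (simplex13 t) =
    Quat ((cos \<alpha> + cos (3*\<alpha>) + cos (9*\<alpha>)) / 3) (sin \<alpha> / 3) (sin (9*\<alpha>) / 3) (sin (3*\<alpha>) / 3)"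
proof -
  have diff: "2 * pi * t / 13 - 2 * pi * s / 13 = \<alpha>"
    "2 * pi * of_int (3 * t) / 13 - 2 * pi * of_int (3 * s) / 13 = 3 * \<alpha>"
    "2 * pi * of_int (9 * t) / 13 - 2 * pi * of_int (9 * s) / 13 = 9 * \<alpha>"
    by (simp_all add: \<alpha>_def field_simps)
  show ?thesis
    unfolding hinner_def simplex13_def zeta13_def prod.case qcnj_scaled_cis_mult diff
    by (simp add: qadd_def add_divide_distrib)
qed

lemma hinner_simplex13_self: "hinner (simplex13 t) (simplex13 t) = qone"
  by (simp add: hinner_simplex13 qone_def)

lemma qnormsq_hinner_simplex13:
  assumes "\<not> 13 dvd (t - s)"
  shows "qnormsq (hinner (simplex13 s) (simplex13 t)) = 5/18"
proof -
  define \<alpha> where "\<alpha> = 2 * pi * (t - s) / 13"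
  have "qnormsq (hinner (simplex13 s) (simplex13 t))
      = ((cos \<alpha> + cos (3*\<alpha>) + cos (9*\<alpha>))\<^sup>2 + (sin \<alpha>)\<^sup>2 + (sin (3*\<alpha>))\<^sup>2 + (sin (9*\<alpha>))\<^sup>2) / 9"
    by (simp add: hinner_simplex13 qnormsq_def \<alpha>_def power_divide)
  also have "\<dots> = (3 + 2 * (cos \<alpha> * cos (3*\<alpha>) + cos (3*\<alpha>) * cos (9*\<alpha>) + cos \<alpha> * cos (9*\<alpha>))) / 9"
    unfolding sin_squared_eq by (simp add: power2_eq_square algebra_simps)
  also have "\<dots> = 5/18"
    using cos_products_1_3_9[OF assms] by (simp add: \<alpha>_def)
  finally show ?thesis .
qed

lemma cshift_simplex13: "cshift (simplex13 t) = hscale (simplex13 (3 * t mod 13)) omega"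
proof -
  have zeta13_cong: "zeta13 a = zeta13 b" if "a mod 13 = b mod 13" for a b
    by (metis that zeta13_mod)
  have "zeta13 (3 * t mod 13) = zeta13 (3 * t)"
    by (rule zeta13_cong) simp
  moreover have "zeta13 (3 * (3 * t mod 13)) = zeta13 (9 * t)"
    by (rule zeta13_cong) (simp add: mod_mult_right_eq)
  moreover have "zeta13 (9 * (3 * t mod 13)) = zeta13 t"
  proof (rule zeta13_cong)
    have "9 * (3 * t mod 13) mod 13 = (t + 2 * t * 13) mod 13"
      by (simp add: mod_mult_right_eq)
    also have "\<dots> = t mod 13"
      by (rule mod_mult_self1)
    finally show "9 * (3 * t mod 13) mod 13 = t mod 13" .
  qed
  ultimately show ?thesis
    unfolding simplex13_def cshift_def hscale_def prod.case
    by (simp add: qmult_assoc omega_mult_omega qcnj_omega_mult_omega)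
qed

lemma image_mult_mod_lessThan:
  fixes k l n :: nat
  assumes "k * l mod n = 1"
  shows "(\<lambda>i. k * i mod n) ` {..<n} = {..<n}"
proof (intro equalityI subsetI)
  fix s assume "s \<in> (\<lambda>i. k * i mod n) ` {..<n}"
  then show "s \<in> {..<n}" by auto
next
  fix s assume s: "s \<in> {..<n}"
  have "k * (l * s mod n) mod n = (k * l mod n) * s mod n"
    by (simp add: mod_mult_right_eq mod_mult_left_eq mult.assoc)
  also have "\<dots> = s" using assms s by simp
  finally show "s \<in> (\<lambda>i. k * i mod n) ` {..<n}"
    using s by (auto intro!: image_eqI[of s _ "l * s mod n"])
qed

lemma tight_simplex_simplex13: "tight_simplex 13 (\<lambda>i. simplex13 (int i))"
  unfolding tight_simplex_def
proof (intro conjI allI impI)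
  fix i j :: nat assume "i < 13" "j < 13" "i \<noteq> j"
  then have "\<not> 13 dvd (int j - int i)" "\<not> 13 dvd (int i - int j)"
    by presburger+
  then have ij: "qnormsq (hinner (simplex13 i) (simplex13 j)) = 5/18"
    and ji: "qnormsq (hinner (simplex13 j) (simplex13 i)) = 5/18"
    by (simp_all add: qnormsq_hinner_simplex13)
  show "hline (simplex13 i) \<noteq> hline (simplex13 j)"
  proof
    assume "hline (simplex13 i) = hline (simplex13 j)"
    then have "qnormsq (hinner (simplex13 j) (simplex13 i)) = 1"
      by (intro hline_eq_imp_qnormsq_hinner_eq_1 hinner_simplex13_self)
    with ji show False by simp
  qed
  show "qnormsq (hinner (simplex13 i) (simplex13 j)) = (real 13 - 3) / (3 * (real 13 - 1))"
    using ij by simp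
qed (simp add: hinner_simplex13_self)

theorem theorem4p9:
  shows "(\<exists>x. tight_simplex 13 x) \<and>
         (\<exists>x. tight_simplex 13 x \<and>
              (\<lambda>L. cshift ` L) ` simplex_points 13 x = simplex_points 13 x)"
proof -
  define x where "x = (\<lambda>i. simplex13 (int i))"
  have shift: "cshift ` hline (x i) = hline (x (3 * i mod 13))" for i
    using cshift_simplex13[of "int i"]
    by (simp add: x_def image_cshift_hline hline_hscale[OF omega_mult_qcnj_omega] zmod_int)
  have "(\<lambda>L. cshift ` L) ` simplex_points 13 x = hline ` x ` (\<lambda>i. 3 * i mod 13) ` {..<13}"
    by (simp add: simplex_points_def image_image shift)
  also have "\<dots> = simplex_points 13 x"
    using image_mult_mod_lessThan[of 3 9 13] by (simp add: simplex_points_def)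
  finally show ?thesis
    using tight_simplex_simplex13 unfolding x_def by blast
qed

end
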